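(* Let $b^*>0$, let $f$ be a real function that is three times differentiable on an open interval containing $[0,b^*]$, with $f'''$ Lebesgue integrable on $[0,b^*]$. Let $a,b\in[0,b^*]$ with $a<b$, let $\alpha\in[0,1]$, $m\in(0,1]$, and let $q>1$, $p$ with $\frac1p+\frac1q=1$. If $|f'''|^q$ is $(\alpha,m)$-convex on $[0,b^*]$, then $$\left|\int_a^{mb}f(x)\,dx-\frac{mb-a}{6}\left[f(a)+4f\left(\frac{a+mb}{2}\right)+f(mb)\right]\right|\le \frac{(mb-a)^4}{96}\left(\frac{\Gamma(2p+1)\Gamma(p+1)}{\Gamma(3p+2)}\right)^{1/p}\left\{\left[\frac{|f'''(a)|^q+m\,[2^\alpha(1+\alpha)-1]\,|f'''(b)|^q}{2^\alpha(1+\alpha)}\right]^{1/q}+\left[\frac{(2^{1+\alpha}-1)|f'''(a)|^q+m\,[2^\alpha(1+\alpha)-(2^{1+\alpha}-1)]\,|f'''(b)|^q}{2^\alpha(1+\alpha)}\right]^{1/q}\right\},$$ where $\Gamma$ is the Gamma function.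
   Context: For $(\alpha,m)\in[0,1]^2$ and $b^*>0$, a function $g:[0,b^*]\to\mathbb{R}$ is called $(\alpha,m)$-convex on $[0,b^*]$ if for all $x,y\in[0,b^*]$ and $t\in[0,1]$, $$g(tx+m(1-t)y)\le t^\alpha g(x)+m(1-t^\alpha)g(y).$$ *)

theory Defs
  imports "HOL-Analysis.Analysis"
begin

text \<open>Real power t^a for t \<ge> 0 with the usual convention 0^0 = 1
  (Isabelle's powr has 0 powr 0 = 0).\<close>
definition rpow :: "real \<Rightarrow> real \<Rightarrow> real" where
  "rpow t a = (if t = 0 \<and> a = 0 then 1 else t powr a)"

definition alpha_m_convex_on :: "real \<Rightarrow> real \<Rightarrow> real \<Rightarrow> (real \<Rightarrow> real) \<Rightarrow> bool" where
  "alpha_m_convex_on \<alpha> m bs g \<longleftrightarrow>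
     (\<forall>x\<in>{0..bs}. \<forall>y\<in>{0..bs}. \<forall>t\<in>{0..1}.
        g (t * x + m * (1 - t) * y) \<le> rpow t \<alpha> * g x + m * (1 - rpow t \<alpha>) * g y)"

end

theory Submission
  imports Defs
begin

(*
  Parametrising the segment from u = m b to w = a by s \<mapsto> u + s (w - u)
  turns the Simpson functional of f on [a, m b] into (u - w) times the
  Simpson functional of G s = f (u + s (w - u)) on [0,1].
*)

section \<open>Hoelder's inequality for continuous functions\<close>

text \<open>The usual normalisation argument is applied to the integrals
  shifted by some e > 0 (so that no division by zero occurs), followed by
  the limit e \<rightarrow> 0.\<close>
lemma holder_continuous:
  fixes f g :: "real \<Rightarrow> real" and l r p q :: real
  assumes lr: "l \<le> r" and cf: "continuous_on {l..r} f" and cg: "continuous_on {l..r} g"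
    and nn: "\<And>x. x \<in> {l..r} \<Longrightarrow> 0 \<le> f x \<and> 0 \<le> g x"
    and p: "p > 1" and q: "q > 1" and pq: "1/p + 1/q = 1"
  shows "integral {l..r} (\<lambda>x. f x * g x)
     \<le> integral {l..r} (\<lambda>x. f x powr p) powr (1/p) * integral {l..r} (\<lambda>x. g x powr q) powr (1/q)"
proof -
  define A where "A = integral {l..r} (\<lambda>x. f x powr p)"
  define B where "B = integral {l..r} (\<lambda>x. g x powr q)"
  have ifp: "(\<lambda>x. f x powr p) integrable_on {l..r}"
    by (rule integrable_continuous_interval, rule continuous_on_powr') (use cf nn p in auto)
  have igq: "(\<lambda>x. g x powr q) integrable_on {l..r}"
    by (rule integrable_continuous_interval, rule continuous_on_powr') (use cg nn q in auto)
  have ifg: "(\<lambda>x. f x * g x) integrable_on {l..r}"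
    by (rule integrable_continuous_interval) (intro continuous_intros cf cg)
  have A0: "A \<ge> 0" unfolding A_def by (rule integral_nonneg[OF ifp]) auto
  have B0: "B \<ge> 0" unfolding B_def by (rule integral_nonneg[OF igq]) auto
  have shifted: "integral {l..r} (\<lambda>x. f x * g x) \<le> (A + e) powr (1/p) * (B + e) powr (1/q)"
    if e: "e > 0" for e
  proof -
    define a where "a = (A + e) powr (1/p)"
    define b where "b = (B + e) powr (1/q)"
    have ab0: "a > 0" "b > 0" unfolding a_def b_def using A0 B0 e by auto
    have ap: "a powr p = A + e" unfolding a_def using A0 e p by (simp add: powr_powr)
    have bq: "b powr q = B + e" unfolding b_def using B0 e q by (simp add: powr_powr)
    have young: "f x * g x / (a * b) \<le> f x powr p / (p * (A + e)) + g x powr q / (q * (B + e))"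
      if x: "x \<in> {l..r}" for x
    proof -
      have "f x * g x / (a * b) = (f x / a) * (g x / b)" by simp
      also have "\<dots> \<le> (f x / a) powr p / p + (g x / b) powr q / q"
        by (rule Youngs_inequality) (use p q pq nn[OF x] ab0 in auto)
      also have "\<dots> = f x powr p / (p * (A + e)) + g x powr q / (q * (B + e))"
        using nn[OF x] ab0 by (simp add: powr_divide ap bq mult.commute)
      finally show ?thesis .
    qed
    have "integral {l..r} (\<lambda>x. f x * g x / (a * b))
       \<le> integral {l..r} (\<lambda>x. f x powr p / (p * (A + e)) + g x powr q / (q * (B + e)))"
      by (rule integral_le) (use young ifp igq ifg in \<open>auto intro!: integrable_on_divide integrable_add\<close>)
    also have "\<dots> = A / (p * (A + e)) + B / (q * (B + e))"
      by (subst integral_add) (use ifp igq in \<open>auto intro!: integrable_on_divide simp: A_def B_def\<close>)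
    also have "\<dots> \<le> 1/p + 1/q"
      using A0 B0 e p q by (intro add_mono divide_left_mono) (auto simp: divide_simps)
    finally have "integral {l..r} (\<lambda>x. f x * g x) / (a * b) \<le> 1" using pq by simp
    then show ?thesis using ab0 by (simp add: a_def b_def field_simps)
  qed
  have lim: "((\<lambda>e. (A + e) powr (1/p) * (B + e) powr (1/q))
              \<longlongrightarrow> (A + 0) powr (1/p) * (B + 0) powr (1/q)) (at_right 0)"
    using p q A0 B0
    by (intro tendsto_intros tendsto_powr')
       (auto intro!: eventually_mono[OF eventually_at_right_less])
  have "integral {l..r} (\<lambda>x. f x * g x) \<le> (A + 0) powr (1/p) * (B + 0) powr (1/q)"
    by (rule tendsto_lowerbound[OF lim])
       (auto intro!: shifted eventually_mono[OF eventually_at_right_less])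
  then show ?thesis by (simp add: A_def B_def)
qed

lemma conjugate_exponent_gt_one:
  fixes p q :: real assumes q: "q > 1" and pq: "1/p + 1/q = 1"
  shows "p > 1"
proof -
  have "1/p = 1 - 1/q" using pq by simp
  moreover have "0 < 1/q" "1/q < 1" using q by auto
  ultimately have "0 < 1/p" "1/p < 1" by auto
  moreover from this(1) have "p > 0" by (simp add: zero_less_divide_1_iff)
  ultimately show ?thesis by (simp add: divide_less_eq)
qed

lemma holder_weighted_root:
  fixes w \<psi> :: "real \<Rightarrow> real"
  assumes lr: "l \<le> r" and cw: "continuous_on {l..r} w" and c\<psi>: "continuous_on {l..r} \<psi>"
    and nn: "\<And>x. x \<in> {l..r} \<Longrightarrow> 0 \<le> w x \<and> 0 \<le> \<psi> x"
    and W: "((\<lambda>x. w x powr p) has_integral W) {l..r}"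
    and p: "p > 1" and q: "q > 1" and pq: "1/p + 1/q = 1"
  shows "integral {l..r} (\<lambda>x. w x * \<psi> x powr (1/q)) \<le> W powr (1/p) * integral {l..r} \<psi> powr (1/q)"
proof -
  have root_cont: "continuous_on {l..r} (\<lambda>x. \<psi> x powr (1/q))"
    by (rule continuous_on_powr'[OF c\<psi> continuous_on_const]) (use nn q in auto)
  have "integral {l..r} (\<lambda>x. w x * \<psi> x powr (1/q))
     \<le> integral {l..r} (\<lambda>x. w x powr p) powr (1/p)
        * integral {l..r} (\<lambda>x. (\<psi> x powr (1/q)) powr q) powr (1/q)"
    by (rule holder_continuous[OF lr cw root_cont _ p q pq]) (use nn in auto)
  also have "integral {l..r} (\<lambda>x. (\<psi> x powr (1/q)) powr q) = integral {l..r} \<psi>"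
    by (rule integral_cong) (use nn q in \<open>auto simp: powr_powr\<close>)
  finally show ?thesis using W by (simp add: integral_unique)
qed

section \<open>The Peano kernel of Simpson's rule\<close>

text \<open>The Peano kernel of Simpson's rule on [0,1], restricted to [0,1/2];
  on [1/2,1] the kernel is its reflection s \<mapsto> peano_weight (1 - s).\<close>
definition peano_weight :: "real \<Rightarrow> real" where
  "peano_weight s = s^2 * (1/2 - s) / 6"

lemma peano_weight_nonneg: "0 \<le> s \<Longrightarrow> s \<le> 1/2 \<Longrightarrow> 0 \<le> peano_weight s"
  by (simp add: peano_weight_def)

lemma continuous_on_peano_weight [continuous_intros]:
  "continuous_on S f \<Longrightarrow> continuous_on S (\<lambda>x. peano_weight (f x))"
  unfolding peano_weight_def by (intro continuous_intros) auto

lemma powr_of_square: fixes x p :: real assumes "0 \<le> x" shows "(x^2) powr p = x powr (2*p)"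
proof (cases "x = 0")
  case False
  then have "x^2 = x powr 2" using assms by (simp add: powr_realpow)
  then show ?thesis by (simp add: powr_powr mult.commute)
qed simp

text \<open>The p-th power of the kernel integrates to a Beta value: substitute
  t = 2 s in the Beta integral of t^(2p) (1 - t)^p over [0,1].\<close>
lemma peano_weight_powr_integral:
  fixes p :: real assumes p: "p > 0"
  shows "((\<lambda>s. peano_weight s powr p) has_integral Beta (2*p+1) (p+1) / 2 / 48 powr p) {0..1/2}"
proof -
  have "((\<lambda>t. t powr (2*p+1 - 1) * (1 - t) powr (p+1 - 1)) has_integral Beta (2*p+1) (p+1)) {0..1}"
    by (rule has_integral_Beta_real) (use p in auto)
  from has_integral_stretch_real[OF this, of 2]
  have "((\<lambda>x. (2*x) powr (2*p) * (1 - 2*x) powr p) has_integral Beta (2*p+1) (p+1) / 2)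
          ((\<lambda>x. x/2) ` {0..1})"
    by simp
  moreover have "(\<lambda>x::real. x/2) ` {0..1} = {0..1/2}"
    using image_affinity_atLeastAtMost[of "1/2" 0 0 "1::real"] by simp
  ultimately have "((\<lambda>x. (2*x) powr (2*p) * (1 - 2*x) powr p / 48 powr p)
                      has_integral Beta (2*p+1) (p+1) / 2 / 48 powr p) {0..1/2}"
    by (intro has_integral_divide) simp
  then show ?thesis
  proof (rule has_integral_eq[rotated])
    fix s :: real assume s: "s \<in> {0..1/2}"
    have "peano_weight s = ((2 * s)^2 * (1 - 2 * s)) / 48"
      by (simp add: peano_weight_def field_simps power2_eq_square)
    then have "peano_weight s powr p = ((2 * s)^2 * (1 - 2 * s)) powr p / 48 powr p"
      by (simp only: powr_divide)
    also have "\<dots> = ((2 * s)^2) powr p * (1 - 2 * s) powr p / 48 powr p"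
      using s by (subst powr_mult) auto
    also have "\<dots> = (2 * s) powr (2*p) * (1 - 2 * s) powr p / 48 powr p"
      using s by (subst powr_of_square) auto
    finally show "(2 * s) powr (2*p) * (1 - 2 * s) powr p / 48 powr p = peano_weight s powr p"
      by simp
  qed
qed

lemma peano_weight_reflected_powr_integral:
  fixes p :: real assumes p: "p > 0"
  shows "((\<lambda>s. peano_weight (1 - s) powr p) has_integral Beta (2*p+1) (p+1) / 2 / 48 powr p) {1/2..1}"
proof -
  from has_integral_affinity[OF peano_weight_powr_integral[OF p, folded cbox_interval], of "-1" 1]
  have "((\<lambda>s. peano_weight ((-1) * s + 1) powr p) has_integral Beta (2*p+1) (p+1) / 2 / 48 powr p)
          ((\<lambda>s. (-1) * s + 1) ` {0..1/2})"
    by simp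
  moreover have "(\<lambda>s. (-1) * s + 1) ` {0..1/2::real} = {1/2..1}"
    using image_affinity_atLeastAtMost[of "-1" 1 0 "1/2::real"] by simp
  ultimately show ?thesis by simp
qed

text \<open>The primitives H1
  and H2 are found by integrating the kernels by parts three times.\<close>
lemma simpson_peano_identity:
  fixes G G1 G2 G3 :: "real \<Rightarrow> real"
  assumes dG: "\<And>s. s \<in> {0..1} \<Longrightarrow> (G has_real_derivative G1 s) (at s)"
    and dG1: "\<And>s. s \<in> {0..1} \<Longrightarrow> (G1 has_real_derivative G2 s) (at s)"
    and dG2: "\<And>s. s \<in> {0..1} \<Longrightarrow> (G2 has_real_derivative G3 s) (at s)"
  obtains E1 E2
  where "((\<lambda>s. peano_weight s * G3 s) has_integral E1) {0..1/2}"
    and "((\<lambda>s. peano_weight (1 - s) * G3 s) has_integral E2) {1/2..1}"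
    and "integral {0..1} G - (G 0 + 4 * G (1/2) + G 1) / 6 = E1 - E2"
proof -
  define H1 where "H1 = (\<lambda>s. peano_weight s * G2 s - (s/6 - s^2/2) * G1 s + (1/6 - s) * G s)"
  define H2 where "H2 = (\<lambda>s. peano_weight (1-s) * G2 s + ((1-s)/6 - (1-s)^2/2) * G1 s
                               + (1/6 - (1-s)) * G s)"
  have dH1: "(H1 has_real_derivative (peano_weight s * G3 s - G s)) (at s)" if "s \<in> {0..1}" for s
    unfolding H1_def peano_weight_def using that
    by (auto intro!: derivative_eq_intros dG dG1 dG2; simp add: field_simps power2_eq_square)
  have dH2: "(H2 has_real_derivative (peano_weight (1-s) * G3 s + G s)) (at s)" if "s \<in> {0..1}" for s
    unfolding H2_def peano_weight_def using that
    by (auto intro!: derivative_eq_intros dG dG1 dG2; simp add: field_simps power2_eq_square)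
  have ftc1: "((\<lambda>s. peano_weight s * G3 s - G s) has_integral (H1 (1/2) - H1 0)) {0..1/2}"
    by (rule fundamental_theorem_of_calculus)
       (auto simp: has_real_derivative_iff_has_vector_derivative[symmetric]
             intro!: has_field_derivative_at_within dH1)
  have ftc2: "((\<lambda>s. peano_weight (1-s) * G3 s + G s) has_integral (H2 1 - H2 (1/2))) {1/2..1}"
    by (rule fundamental_theorem_of_calculus)
       (auto simp: has_real_derivative_iff_has_vector_derivative[symmetric]
             intro!: has_field_derivative_at_within dH2)
  have contG: "continuous_on {0..1} G"
    using dG by (intro continuous_at_imp_continuous_on ballI DERIV_isCont) auto
  have intG: "G integrable_on {l..r}" if "{l..r} \<subseteq> {0..1}" for l r
    by (rule integrable_continuous_interval, rule continuous_on_subset[OF contG that])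
  have split: "integral {0..1} G = integral {0..1/2} G + integral {1/2..1} G"
    using Henstock_Kurzweil_Integration.integral_combine[where a=0 and c="1/2" and b=1 and f=G]
          intG[of 0 1] by simp
  show ?thesis
  proof
    show "((\<lambda>s. peano_weight s * G3 s) has_integral H1 (1/2) - H1 0 + integral {0..1/2} G) {0..1/2}"
      using has_integral_add[OF ftc1 integrable_integral[OF intG]] by simp
    show "((\<lambda>s. peano_weight (1-s) * G3 s) has_integral H2 1 - H2 (1/2) - integral {1/2..1} G) {1/2..1}"
      using has_integral_diff[OF ftc2 integrable_integral[OF intG]] by simp
    show "integral {0..1} G - (G 0 + 4 * G (1/2) + G 1) / 6
          = (H1 (1/2) - H1 0 + integral {0..1/2} G) - (H2 1 - H2 (1/2) - integral {1/2..1} G)"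
      unfolding split H1_def H2_def peano_weight_def by (simp add: algebra_simps power2_eq_square)
  qed
qed

lemma simpson_error_bound:
  fixes G G1 G2 G3 g :: "real \<Rightarrow> real"
  assumes dG: "\<And>s. s \<in> {0..1} \<Longrightarrow> (G has_real_derivative G1 s) (at s)"
    and dG1: "\<And>s. s \<in> {0..1} \<Longrightarrow> (G1 has_real_derivative G2 s) (at s)"
    and dG2: "\<And>s. s \<in> {0..1} \<Longrightarrow> (G2 has_real_derivative G3 s) (at s)"
    and major: "\<And>s. s \<in> {0..1} \<Longrightarrow> \<bar>G3 s\<bar> \<le> g s"
    and cg: "continuous_on {0..1} g"
  shows "\<bar>integral {0..1} G - (G 0 + 4 * G (1/2) + G 1) / 6\<bar>
         \<le> integral {0..1/2} (\<lambda>s. peano_weight s * g s)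
          + integral {1/2..1} (\<lambda>s. peano_weight (1 - s) * g s)"
proof -
  obtain E1 E2
    where E1: "((\<lambda>s. peano_weight s * G3 s) has_integral E1) {0..1/2}"
      and E2: "((\<lambda>s. peano_weight (1 - s) * G3 s) has_integral E2) {1/2..1}"
      and identity: "integral {0..1} G - (G 0 + 4 * G (1/2) + G 1) / 6 = E1 - E2"
    using simpson_peano_identity[OF dG dG1 dG2] by blast
  have cg': "continuous_on {l..r} g" if "{l..r} \<subseteq> {0..1}" for l r
    using continuous_on_subset[OF cg that] .
  have "\<bar>E1\<bar> \<le> integral {0..1/2} (\<lambda>s. peano_weight s * g s)"
    unfolding integral_unique[OF E1, symmetric] real_norm_def[symmetric]
  proof (rule integral_norm_bound_integral)
    show "(\<lambda>s. peano_weight s * G3 s) integrable_on {0..1/2}" using E1 by blast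
    show "(\<lambda>s. peano_weight s * g s) integrable_on {0..1/2}"
      by (intro integrable_continuous_interval continuous_intros cg') auto
    show "norm (peano_weight s * G3 s) \<le> peano_weight s * g s" if "s \<in> {0..1/2}" for s
      using that major[of s] peano_weight_nonneg[of s] by (simp add: abs_mult mult_left_mono)
  qed
  moreover have "\<bar>E2\<bar> \<le> integral {1/2..1} (\<lambda>s. peano_weight (1 - s) * g s)"
    unfolding integral_unique[OF E2, symmetric] real_norm_def[symmetric]
  proof (rule integral_norm_bound_integral)
    show "(\<lambda>s. peano_weight (1 - s) * G3 s) integrable_on {1/2..1}" using E2 by blast
    show "(\<lambda>s. peano_weight (1 - s) * g s) integrable_on {1/2..1}"
      by (intro integrable_continuous_interval continuous_intros cg') auto
    show "norm (peano_weight (1 - s) * G3 s) \<le> peano_weight (1 - s) * g s" if "s \<in> {1/2..1}" for s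
      using that major[of s] peano_weight_nonneg[of "1 - s"] by (simp add: abs_mult mult_left_mono)
  qed
  ultimately show ?thesis
    unfolding identity by linarith
qed

lemma peano_weight_constant:
  fixes p q X :: real
  assumes p: "p > 0" and pq: "1/p + 1/q = 1" and X: "0 \<le> X"
  shows "(Beta (2*p+1) (p+1) / 2 / 48 powr p) powr (1/p) * X powr (1/q)
         = (Gamma (2*p+1) * Gamma (p+1) / Gamma (3*p+2)) powr (1/p) / 96 * (2 * X) powr (1/q)"
proof -
  have beta: "Beta (2*p+1) (p+1) = Gamma (2*p+1) * Gamma (p+1) / Gamma (3*p+2)"
    unfolding Beta_def by (simp add: algebra_simps)
  have "2 powr (1/p) * 2 powr (1/q) = (2::real)"
    using pq by (simp add: powr_add[symmetric])
  then have two: "1 / 2 powr (1/p) = 2 powr (1/q) / (2::real)"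
    by (simp add: field_simps)
  have "(48 powr p) powr (1/p) = (48::real)"
    using p by (simp add: powr_powr)
  then have root: "(Beta (2*p+1) (p+1) / 2 / 48 powr p) powr (1/p)
                   = Beta (2*p+1) (p+1) powr (1/p) * (1 / 2 powr (1/p)) / 48"
    by (simp only: powr_divide) simp
  show ?thesis
    unfolding root unfolding two beta using X by (simp add: powr_mult)
qed

text \<open>Simpson error bound when the third derivative is dominated by
  K psi^(1/q): Hoelder's inequality on each half of [0,1] separates the
  kernel (a Beta integral) from the integral of psi.\<close>
lemma simpson_holder_bound:
  fixes G G1 G2 G3 \<psi> :: "real \<Rightarrow> real" and K p q :: real
  assumes dG: "\<And>s. s \<in> {0..1} \<Longrightarrow> (G has_real_derivative G1 s) (at s)"
    and dG1: "\<And>s. s \<in> {0..1} \<Longrightarrow> (G1 has_real_derivative G2 s) (at s)"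
    and dG2: "\<And>s. s \<in> {0..1} \<Longrightarrow> (G2 has_real_derivative G3 s) (at s)"
    and c\<psi>: "continuous_on {0..1} \<psi>" and \<psi>_nonneg: "\<And>s. s \<in> {0..1} \<Longrightarrow> 0 \<le> \<psi> s"
    and K: "0 \<le> K" and major: "\<And>s. s \<in> {0..1} \<Longrightarrow> \<bar>G3 s\<bar> \<le> K * \<psi> s powr (1/q)"
    and q: "q > 1" and pq: "1/p + 1/q = 1"
  shows "\<bar>integral {0..1} G - (G 0 + 4 * G (1/2) + G 1) / 6\<bar>
         \<le> K / 96 * (Gamma (2*p+1) * Gamma (p+1) / Gamma (3*p+2)) powr (1/p)
            * ((2 * integral {0..1/2} \<psi>) powr (1/q) + (2 * integral {1/2..1} \<psi>) powr (1/q))"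
proof -
  have p: "p > 1"
    using conjugate_exponent_gt_one[OF q pq] .
  define W where "W = Beta (2*p+1) (p+1) / 2 / 48 powr p"
  have c\<psi>': "continuous_on {l..r} \<psi>" if "{l..r} \<subseteq> {0..1}" for l r
    using continuous_on_subset[OF c\<psi> that] .
  have root_cont: "continuous_on {0..1} (\<lambda>s. \<psi> s powr (1/q))"
    by (rule continuous_on_powr'[OF c\<psi> continuous_on_const]) (use \<psi>_nonneg q in auto)
  have holder1: "integral {0..1/2} (\<lambda>s. peano_weight s * \<psi> s powr (1/q))
                   \<le> W powr (1/p) * integral {0..1/2} \<psi> powr (1/q)"
  proof (rule holder_weighted_root[OF _ _ _ _ _ p q pq])
    show "((\<lambda>s. peano_weight s powr p) has_integral W) {0..1/2}"
      unfolding W_def using peano_weight_powr_integral p by simp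
  qed (use \<psi>_nonneg peano_weight_nonneg in \<open>auto intro!: continuous_intros c\<psi>'\<close>)
  have holder2: "integral {1/2..1} (\<lambda>s. peano_weight (1 - s) * \<psi> s powr (1/q))
                   \<le> W powr (1/p) * integral {1/2..1} \<psi> powr (1/q)"
  proof (rule holder_weighted_root[OF _ _ _ _ _ p q pq])
    show "((\<lambda>s. peano_weight (1 - s) powr p) has_integral W) {1/2..1}"
      unfolding W_def using peano_weight_reflected_powr_integral p by simp
  qed (use \<psi>_nonneg peano_weight_nonneg in \<open>auto intro!: continuous_intros c\<psi>'\<close>)
  have "\<bar>integral {0..1} G - (G 0 + 4 * G (1/2) + G 1) / 6\<bar>
        \<le> integral {0..1/2} (\<lambda>s. peano_weight s * (K * \<psi> s powr (1/q)))
         + integral {1/2..1} (\<lambda>s. peano_weight (1 - s) * (K * \<psi> s powr (1/q)))"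
    by (rule simpson_error_bound[OF dG dG1 dG2 major]) (auto intro!: continuous_intros root_cont)
  also have "\<dots> = K * (integral {0..1/2} (\<lambda>s. peano_weight s * \<psi> s powr (1/q))
                    + integral {1/2..1} (\<lambda>s. peano_weight (1 - s) * \<psi> s powr (1/q)))"
    by (simp add: mult.left_commute[of _ K] distrib_left)
  also have "\<dots> \<le> K * (W powr (1/p) * integral {0..1/2} \<psi> powr (1/q)
                    + W powr (1/p) * integral {1/2..1} \<psi> powr (1/q))"
    using holder1 holder2 K by (intro mult_left_mono add_mono)
  also have "\<dots> = K / 96 * (Gamma (2*p+1) * Gamma (p+1) / Gamma (3*p+2)) powr (1/p)
            * ((2 * integral {0..1/2} \<psi>) powr (1/q) + (2 * integral {1/2..1} \<psi>) powr (1/q))"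
  proof -
    have "0 \<le> integral {l..r} \<psi>" if "{l..r} \<subseteq> {0..1}" for l r
      using that \<psi>_nonneg by (intro integral_nonneg integrable_continuous_interval c\<psi>') auto
    then have "W powr (1/p) * integral {l..r} \<psi> powr (1/q)
               = (Gamma (2*p+1) * Gamma (p+1) / Gamma (3*p+2)) powr (1/p) / 96
                 * (2 * integral {l..r} \<psi>) powr (1/q)"
      if "{l..r} \<subseteq> {0..1}" for l r
      unfolding W_def using p that by (intro peano_weight_constant[OF _ pq]) auto
    then show ?thesis
      by (simp add: algebra_simps)
  qed
  finally show ?thesis .
qed

section \<open>The majorant supplied by (alpha,m)-convexity\<close>

lemma rpow_bounds: "0 \<le> a \<Longrightarrow> s \<in> {0..1} \<Longrightarrow> 0 \<le> rpow s a \<and> rpow s a \<le> 1"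
  by (auto simp: rpow_def powr_le1)

lemma continuous_on_rpow: assumes "0 \<le> a" shows "continuous_on {0..1} (\<lambda>s. rpow s a)"
proof (cases "a = 0")
  case True
  then have "(\<lambda>s. rpow s a) = (\<lambda>s. 1)"
    by (auto simp: rpow_def fun_eq_iff)
  then show ?thesis
    by (simp only: continuous_on_const)
next
  case False
  have "continuous_on {0..1} (\<lambda>s::real. s powr a)"
    using assms False by (intro continuous_on_powr' continuous_intros) auto
  then show ?thesis
    using False by (simp add: rpow_def)
qed

text \<open>On [l,r] \<subseteq> [0,\<infinity>) the function s \<mapsto> s^a is integrated by its
  primitive s^(a+1)/(a+1); the convention 0^0 = 1 makes this valid for a = 0.\<close>
lemma rpow_has_integral:
  assumes a: "0 \<le> a" and lr: "0 \<le> l" "l \<le> r"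
  shows "((\<lambda>s. rpow s a) has_integral (r powr (a+1) / (a+1) - l powr (a+1) / (a+1))) {l..r}"
proof (rule fundamental_theorem_of_calculus_interior[OF lr(2)])
  show "continuous_on {l..r} (\<lambda>s. s powr (a+1) / (a+1))"
    using a lr by (intro continuous_on_divide continuous_on_powr' continuous_intros) auto
  fix x assume "x \<in> {l<..<r}"
  then have x0: "x > 0" using lr by auto
  have "((\<lambda>s. s powr (a+1) / (a+1)) has_real_derivative ((a+1) * x powr (a+1-1) / (a+1))) (at x)"
    using x0 by (auto intro!: derivative_eq_intros)
  moreover have "(a+1) * x powr (a+1-1) / (a+1) = rpow x a"
    using x0 a by (simp add: rpow_def)
  ultimately show "((\<lambda>s. s powr (a+1) / (a+1)) has_vector_derivative rpow x a) (at x)"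
    by (simp add: has_real_derivative_iff_has_vector_derivative)
qed

text \<open>The integrals of the convexity majorant
  s \<mapsto> s^alpha A + m (1 - s^alpha) B over the two halves of [0,1]; these
  produce the two bracketed terms of the final estimate.\<close>
lemma convexity_majorant_half_integrals:
  fixes \<alpha> m A B :: real
  assumes \<alpha>: "0 \<le> \<alpha>"
  shows "2 * integral {0..1/2} (\<lambda>s. rpow s \<alpha> * A + m * (1 - rpow s \<alpha>) * B)
           = (A + m * (2 powr \<alpha> * (1 + \<alpha>) - 1) * B) / (2 powr \<alpha> * (1 + \<alpha>))"
    and "2 * integral {1/2..1} (\<lambda>s. rpow s \<alpha> * A + m * (1 - rpow s \<alpha>) * B)
           = ((2 powr (1 + \<alpha>) - 1) * A + m * (2 powr \<alpha> * (1 + \<alpha>) - (2 powr (1 + \<alpha>) - 1)) * B)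
             / (2 powr \<alpha> * (1 + \<alpha>))"
proof -
  define \<psi> where "\<psi> = (\<lambda>s. rpow s \<alpha> * A + m * (1 - rpow s \<alpha>) * B)"
  have int\<psi>: "integral {l..r} \<psi>
               = m * B * (r - l) + (A - m * B) * (r powr (\<alpha>+1) / (\<alpha>+1) - l powr (\<alpha>+1) / (\<alpha>+1))"
    if "0 \<le> l" "l \<le> r" for l r
  proof (rule integral_unique)
    have "((\<lambda>s. m * B + (A - m * B) * rpow s \<alpha>) has_integral
           m * B * (r - l) + (A - m * B) * (r powr (\<alpha>+1) / (\<alpha>+1) - l powr (\<alpha>+1) / (\<alpha>+1))) {l..r}"
      using that has_integral_const_real[of "m * B" l r]
      by (intro has_integral_add has_integral_mult_right rpow_has_integral \<alpha>) (auto simp: mult.commute)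
    then show "(\<psi> has_integral m * B * (r - l)
                 + (A - m * B) * (r powr (\<alpha>+1) / (\<alpha>+1) - l powr (\<alpha>+1) / (\<alpha>+1))) {l..r}"
      unfolding \<psi>_def by (rule has_integral_eq[rotated]) (simp add: algebra_simps)
  qed
  define P where "P = (2::real) powr \<alpha>"
  define c where "c = 1 + \<alpha>"
  have P: "P > 0" "c > 0" and c: "\<alpha> + 1 = c"
    unfolding P_def c_def using \<alpha> by auto
  have half: "(1/2::real) powr c = 1 / (2 * P)"
    unfolding P_def c_def by (simp add: powr_divide powr_add)
  have double: "(2::real) powr c = 2 * P"
    unfolding P_def c_def by (simp add: powr_add)
  show "2 * integral {0..1/2} \<psi> = (A + m * (2 powr \<alpha> * (1 + \<alpha>) - 1) * B) / (2 powr \<alpha> * (1 + \<alpha>))"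
    unfolding int\<psi>[of 0 "1/2", simplified] c half P_def[symmetric] c_def[symmetric]
    using P by (simp add: field_simps)
  show "2 * integral {1/2..1} \<psi> = ((2 powr (1 + \<alpha>) - 1) * A
          + m * (2 powr \<alpha> * (1 + \<alpha>) - (2 powr (1 + \<alpha>) - 1)) * B) / (2 powr \<alpha> * (1 + \<alpha>))"
    unfolding int\<psi>[of "1/2" 1, simplified] c half c_def[symmetric] double P_def[symmetric]
    using P by (simp add: field_simps)
qed

lemma alpha_m_convex_root_bound:
  fixes F :: "real \<Rightarrow> real"
  assumes conv: "alpha_m_convex_on \<alpha> m bs (\<lambda>x. \<bar>F x\<bar> powr q)" and q: "q > 0"
    and xy: "x \<in> {0..bs}" "y \<in> {0..bs}" and t: "t \<in> {0..1}"
  shows "\<bar>F (t * x + m * (1 - t) * y)\<bar>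
         \<le> (rpow t \<alpha> * \<bar>F x\<bar> powr q + m * (1 - rpow t \<alpha>) * \<bar>F y\<bar> powr q) powr (1/q)"
proof -
  have "\<bar>F (t * x + m * (1 - t) * y)\<bar> powr q
        \<le> rpow t \<alpha> * \<bar>F x\<bar> powr q + m * (1 - rpow t \<alpha>) * \<bar>F y\<bar> powr q"
    using conv xy t unfolding alpha_m_convex_on_def by blast
  then have "(\<bar>F (t * x + m * (1 - t) * y)\<bar> powr q) powr (1/q)
             \<le> (rpow t \<alpha> * \<bar>F x\<bar> powr q + m * (1 - rpow t \<alpha>) * \<bar>F y\<bar> powr q) powr (1/q)"
    by (rule powr_mono2[rotated 2]) (use q in auto)
  then show ?thesis
    using q by (simp add: powr_powr)
qed

section \<open>Simpson's inequality on a segment\<close>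

text \<open>Chain rule for the affine reparametrisation s \<mapsto> v + s h, with a power of
  h as scaling factor; iterating it gives the derivatives of
  s \<mapsto> f (v + s h).\<close>
lemma has_real_derivative_affine_scaled:
  fixes F :: "real \<Rightarrow> real" and D v h s :: real and k :: nat
  assumes "(F has_real_derivative D) (at (v + s * h))"
  shows "((\<lambda>s. h^k * F (v + s * h)) has_real_derivative h^(Suc k) * D) (at s)"
proof -
  have "((\<lambda>s. v + s * h) has_real_derivative h) (at s)"
    by (auto intro!: derivative_eq_intros)
  from DERIV_chain2[OF assms this]
  have "((\<lambda>s. F (v + s * h)) has_real_derivative D * h) (at s)" .
  from DERIV_cmult[OF this, of "h^k"] show ?thesis
    by (simp add: mult_ac)
qed

lemma interval_integral_affine:
  fixes f :: "real \<Rightarrow> real"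
  assumes cf: "continuous_on (closed_segment x y) f"
  shows "(LBINT t=ereal x..ereal y. f t) = (y - x) * integral {0..1} (\<lambda>s. f (x + s * (y - x)))"
proof -
  have img: "(\<lambda>s. x + s * (y - x)) ` {0..1} \<subseteq> closed_segment x y"
  proof
    fix t assume "t \<in> (\<lambda>s. x + s * (y - x)) ` {0..1}"
    then obtain s where s: "s \<in> {0..1}" "t = (1 - s) * x + s * y"
      by (auto simp: algebra_simps)
    then show "t \<in> closed_segment x y"
      unfolding closed_segment_def by auto
  qed
  have cont: "continuous_on {0..1} (\<lambda>s. f (x + s * (y - x)))"
    by (rule continuous_on_compose2[OF cf _ img]) (intro continuous_intros)
  have "(LBINT s=ereal 0..ereal 1. (y - x) *\<^sub>R f (x + s * (y - x)))
        = (LBINT t=ereal (x + 0 * (y - x))..ereal (x + 1 * (y - x)). f t)"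
    by (rule interval_integral_substitution_finite[where g'="\<lambda>_. y - x"])
       (auto intro!: derivative_eq_intros continuous_on_subset[OF cf img])
  moreover have "(LBINT s=ereal 0..ereal 1. (y - x) *\<^sub>R f (x + s * (y - x)))
                 = integral {0..1} (\<lambda>s. (y - x) *\<^sub>R f (x + s * (y - x)))"
    by (rule interval_integral_eq_integral)
       (auto intro!: borel_integrable_atLeastAtMost' continuous_intros cont)
  ultimately show ?thesis
    by simp
qed

lemma simpson_holder_segment:
  fixes f Df D2f D3f \<psi> :: "real \<Rightarrow> real" and u w p q :: real
  assumes d1: "\<And>x. x \<in> closed_segment u w \<Longrightarrow> (f has_real_derivative Df x) (at x)"
    and d2: "\<And>x. x \<in> closed_segment u w \<Longrightarrow> (Df has_real_derivative D2f x) (at x)"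
    and d3: "\<And>x. x \<in> closed_segment u w \<Longrightarrow> (D2f has_real_derivative D3f x) (at x)"
    and c\<psi>: "continuous_on {0..1} \<psi>" and \<psi>_nonneg: "\<And>s. s \<in> {0..1} \<Longrightarrow> 0 \<le> \<psi> s"
    and major: "\<And>s. s \<in> {0..1} \<Longrightarrow> \<bar>D3f (u + s * (w - u))\<bar> \<le> \<psi> s powr (1/q)"
    and q: "q > 1" and pq: "1/p + 1/q = 1"
  shows "\<bar>(LBINT x=ereal w..ereal u. f x) - (u - w) / 6 * (f w + 4 * f ((w + u) / 2) + f u)\<bar>
         \<le> (u - w) ^ 4 / 96 * (Gamma (2*p+1) * Gamma (p+1) / Gamma (3*p+2)) powr (1/p)
            * ((2 * integral {0..1/2} \<psi>) powr (1/q) + (2 * integral {1/2..1} \<psi>) powr (1/q))"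
proof -
  define h where "h = w - u"
  have on_segment: "u + s * h \<in> closed_segment u w" if "s \<in> {0..1}" for s
    using that unfolding h_def closed_segment_def by (auto intro!: exI[of _ s] simp: algebra_simps)
  have dG: "((\<lambda>s. f (u + s * h)) has_real_derivative h * Df (u + s * h)) (at s)"
    if "s \<in> {0..1}" for s
    using has_real_derivative_affine_scaled[where k=0, OF d1[OF on_segment[OF that]]] by simp
  have dG1: "((\<lambda>s. h * Df (u + s * h)) has_real_derivative h^2 * D2f (u + s * h)) (at s)"
    if "s \<in> {0..1}" for s
    using has_real_derivative_affine_scaled[where k=1, OF d2[OF on_segment[OF that]]]
    by (simp add: power2_eq_square)
  have dG2: "((\<lambda>s. h^2 * D2f (u + s * h)) has_real_derivative h^3 * D3f (u + s * h)) (at s)"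
    if "s \<in> {0..1}" for s
    using has_real_derivative_affine_scaled[where k=2, OF d3[OF on_segment[OF that]]]
    by (simp add: power2_eq_square power3_eq_cube)
  have "\<bar>h^3 * D3f (u + s * h)\<bar> \<le> \<bar>h\<bar>^3 * \<psi> s powr (1/q)" if "s \<in> {0..1}" for s
    using major[OF that] unfolding h_def by (simp add: abs_mult power_abs mult_left_mono)
  from simpson_holder_bound[OF dG dG1 dG2 c\<psi> \<psi>_nonneg _ this q pq]
  have simpson: "\<bar>integral {0..1} (\<lambda>s. f (u + s * h))
                   - (f (u + 0 * h) + 4 * f (u + 1/2 * h) + f (u + 1 * h)) / 6\<bar>
                 \<le> \<bar>h\<bar>^3 / 96 * (Gamma (2*p+1) * Gamma (p+1) / Gamma (3*p+2)) powr (1/p)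
                    * ((2 * integral {0..1/2} \<psi>) powr (1/q) + (2 * integral {1/2..1} \<psi>) powr (1/q))"
    by simp
  have "continuous_on (closed_segment u w) f"
    using d1 by (intro continuous_at_imp_continuous_on ballI DERIV_isCont) auto
  then have "(LBINT x=ereal u..ereal w. f x) = h * integral {0..1} (\<lambda>s. f (u + s * h))"
    unfolding h_def by (rule interval_integral_affine)
  then have "(LBINT x=ereal w..ereal u. f x) - (u - w) / 6 * (f w + 4 * f ((w + u) / 2) + f u)
             = - h * (integral {0..1} (\<lambda>s. f (u + s * h))
                      - (f (u + 0 * h) + 4 * f (u + 1/2 * h) + f (u + 1 * h)) / 6)"
    using interval_integral_endpoints_reverse[of w u f]
    by (simp add: h_def field_simps)
  moreover have "(u - w) ^ 4 = \<bar>h\<bar> * \<bar>h\<bar>^3"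
    unfolding h_def by (simp add: power_even_abs_numeral power4_eq_xxxx power3_eq_cube algebra_simps)
  ultimately show ?thesis
    using simpson by (simp add: abs_mult mult_left_mono mult_ac)
qed

text \<open>Apply Simpson's inequality on the segment from m b to a, with the
  majorant psi furnished by (alpha,m)-convexity; the point
  m b + s (a - m b) is the combination s a + m (1 - s) b.\<close>
theorem theorem4:
  fixes f f1 f2 f3 :: "real \<Rightarrow> real" and bs a b \<alpha> m p q c d :: real
  assumes bs_pos: "bs > 0"
    and cd: "c < 0" "bs < d"
    and d1: "\<And>x. x \<in> {c<..<d} \<Longrightarrow> (f has_real_derivative f1 x) (at x)"
    and d2: "\<And>x. x \<in> {c<..<d} \<Longrightarrow> (f1 has_real_derivative f2 x) (at x)"
    and d3: "\<And>x. x \<in> {c<..<d} \<Longrightarrow> (f2 has_real_derivative f3 x) (at x)"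
    and int3: "set_integrable lborel {0..bs} f3"
    and ab: "a \<in> {0..bs}" "b \<in> {0..bs}" "a < b"
    and alpha: "\<alpha> \<in> {0..1}"
    and mm: "m \<in> {0<..1}"
    and q: "q > 1" and pq: "1 / p + 1 / q = 1"
    and conv: "alpha_m_convex_on \<alpha> m bs (\<lambda>x. \<bar>f3 x\<bar> powr q)"
  shows "\<bar>(LBINT x=ereal a..ereal (m * b). f x)
            - (m * b - a) / 6 * (f a + 4 * f ((a + m * b) / 2) + f (m * b))\<bar>
         \<le> (m * b - a) ^ 4 / 96
            * (Gamma (2 * p + 1) * Gamma (p + 1) / Gamma (3 * p + 2)) powr (1 / p)
            * ((( \<bar>f3 a\<bar> powr q + m * (2 powr \<alpha> * (1 + \<alpha>) - 1) * \<bar>f3 b\<bar> powr q)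
                  / (2 powr \<alpha> * (1 + \<alpha>))) powr (1 / q)
             + (((2 powr (1 + \<alpha>) - 1) * \<bar>f3 a\<bar> powr q
                  + m * (2 powr \<alpha> * (1 + \<alpha>) - (2 powr (1 + \<alpha>) - 1)) * \<bar>f3 b\<bar> powr q)
                  / (2 powr \<alpha> * (1 + \<alpha>))) powr (1 / q))"
proof -
  define \<psi> where "\<psi> = (\<lambda>s. rpow s \<alpha> * \<bar>f3 a\<bar> powr q + m * (1 - rpow s \<alpha>) * \<bar>f3 b\<bar> powr q)"
  have "m * b \<le> 1 * b"
    using ab mm by (intro mult_right_mono) auto
  then have "0 \<le> m * b" "m * b \<le> bs"
    using ab mm by (simp_all, linarith)
  then have "closed_segment (m * b) a \<subseteq> {c<..<d}"
    using ab cd by (auto simp: closed_segment_eq_real_ivl)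
  moreover have "\<bar>f3 (m * b + s * (a - m * b))\<bar> \<le> \<psi> s powr (1/q)" if "s \<in> {0..1}" for s
    using alpha_m_convex_root_bound[OF conv _ ab(1,2) that] q
    unfolding \<psi>_def by (simp add: algebra_simps)
  moreover have "continuous_on {0..1} \<psi>"
    unfolding \<psi>_def using alpha by (intro continuous_intros continuous_on_rpow) auto
  moreover have "0 \<le> \<psi> s" if "s \<in> {0..1}" for s
    unfolding \<psi>_def using rpow_bounds[OF _ that, of \<alpha>] alpha mm by auto
  ultimately have "\<bar>(LBINT x=ereal a..ereal (m * b). f x)
            - (m * b - a) / 6 * (f a + 4 * f ((a + m * b) / 2) + f (m * b))\<bar>
         \<le> (m * b - a) ^ 4 / 96 * (Gamma (2*p+1) * Gamma (p+1) / Gamma (3*p+2)) powr (1/p)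
            * ((2 * integral {0..1/2} \<psi>) powr (1/q) + (2 * integral {1/2..1} \<psi>) powr (1/q))"
    using d1 d2 d3 by (intro simpson_holder_segment[where Df=f1 and D2f=f2 and D3f=f3, OF _ _ _ _ _ _ q pq]) auto
  then show ?thesis
    using convexity_majorant_half_integrals[of \<alpha> "\<bar>f3 a\<bar> powr q" m "\<bar>f3 b\<bar> powr q"] alpha
    unfolding \<psi>_def by simp
qed

end
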